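(* For a locally convex space $E$ consider the properties: (1) $E$ has an $\omega^\omega$-base; (2) $E$ has a countable $\mathsf s^*$-network at zero; (3) $E$ has a countable $\mathsf{cs}^*$-network at zero; (4) $E$ has a countable $\mathsf{cs}^\bullet$-network at zero; (5) $E$ has a countable radial network; (6) each uncountable subset of $E$ contains an infinite bounded subset; (7) $E$ contains an infinite-dimensional compact set. Then $(1)\Rightarrow(2)\Rightarrow(3)\Rightarrow(4)\Rightarrow(5)\Rightarrow(6)$. If moreover $E$ has an uncountable Hamel basis, then $(6)\Rightarrow(7)$.
   Context: $E$ has an $\omega^\omega$-base if there is a neighborhood base $(U_\alpha)_{\alpha\in\omega^\omega}$ at zero with $U_\beta\subseteq U_\alpha$ whenever $\alpha\le\beta$ pointwise. A sequence $(x_n)$ accumulates at $x$ if every neighborhood of $x$ contains $x_n$ for infinitely many $n$. A family $\mathcal N$ of subsets of $E$ is: an $\mathsf s^*$-network at $x$ if for every neighborhood $O_x$ of $x$ and every sequence $(x_n)$ accumulating at $x$ there is $N\in\mathcal N$ with $N\subseteq O_x$ and $\{n:x_n\in N\}$ infinite; a $\mathsf{cs}^*$-network at $x$ if the same holds for every sequence converging to $x$; a $\mathsf{cs}^\bullet$-network at $x$ if for every neighborhood $O_x$ of $x$ and every sequence $(x_n)$ converging to $x$ there is $N\in\mathcal N$ with $N\subseteq O_x$ containing some $x_n$. A radial network is a family $\mathcal N$ of subsets of $E$ such that for every neighborhood $U$ of zero and every $x\in E$ there are $N\in\mathcal N$ and a nonzero real $\varepsilon$ with $\varepsilon x\in N\subseteq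 U$. Bounded: $B\subseteq nU$ for some $n$, for every neighborhood $U$ of zero. An infinite-dimensional compact set is one of infinite topological dimension (equivalently, not contained in a finite-dimensional subspace). *)

theory Defs
  imports "HOL-Analysis.Analysis"
begin

definition nhd :: "'a::topological_space \<Rightarrow> 'a set \<Rightarrow> bool" where
  "nhd x N \<longleftrightarrow> (\<exists>W. open W \<and> x \<in> W \<and> W \<subseteq> N)"

definition locally_convex_space :: "'a::{real_vector,t2_space} itself \<Rightarrow> bool" where
  "locally_convex_space _ \<longleftrightarrow>
     continuous_on UNIV (\<lambda>p::'a \<times> 'a. fst p + snd p) \<and>
     continuous_on UNIV (\<lambda>p::real \<times> 'a. fst p *\<^sub>R snd p) \<and>
     (\<forall>U::'a set. nhd 0 U \<longrightarrow> (\<exists>V. open V \<and> convex V \<and> 0 \<in> V \<and> V \<subseteq> U))"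

definition has_ww_base :: "'a::{real_vector,topological_space} itself \<Rightarrow> bool" where
  "has_ww_base _ \<longleftrightarrow> (\<exists>U :: (nat \<Rightarrow> nat) \<Rightarrow> 'a set.
      (\<forall>\<alpha>. nhd 0 (U \<alpha>)) \<and> (\<forall>N. nhd 0 N \<longrightarrow> (\<exists>\<alpha>. U \<alpha> \<subseteq> N)) \<and>
      (\<forall>\<alpha> \<beta>. \<alpha> \<le> \<beta> \<longrightarrow> U \<beta> \<subseteq> U \<alpha>))"

definition accumulates :: "(nat \<Rightarrow> 'a::topological_space) \<Rightarrow> 'a \<Rightarrow> bool" where
  "accumulates s x \<longleftrightarrow> (\<forall>W. nhd x W \<longrightarrow> infinite {n. s n \<in> W})"

definition s_star_network_at :: "'a::topological_space set set \<Rightarrow> 'a \<Rightarrow> bool" where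
  "s_star_network_at \<N> x \<longleftrightarrow> (\<forall>W s. nhd x W \<and> accumulates s x \<longrightarrow>
      (\<exists>N\<in>\<N>. N \<subseteq> W \<and> infinite {n. s n \<in> N}))"

definition cs_star_network_at :: "'a::topological_space set set \<Rightarrow> 'a \<Rightarrow> bool" where
  "cs_star_network_at \<N> x \<longleftrightarrow> (\<forall>W s. nhd x W \<and> s \<longlonglongrightarrow> x \<longrightarrow>
      (\<exists>N\<in>\<N>. N \<subseteq> W \<and> infinite {n. s n \<in> N}))"

definition cs_bullet_network_at :: "'a::topological_space set set \<Rightarrow> 'a \<Rightarrow> bool" where
  "cs_bullet_network_at \<N> x \<longleftrightarrow> (\<forall>W s. nhd x W \<and> s \<longlonglongrightarrow> x \<longrightarrow>
      (\<exists>N\<in>\<N>. N \<subseteq> W \<and> (\<exists>n. s n \<in> N)))"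

definition radial_network :: "'a::{real_vector,topological_space} set set \<Rightarrow> bool" where
  "radial_network \<N> \<longleftrightarrow> (\<forall>U x. nhd 0 U \<longrightarrow>
      (\<exists>N\<in>\<N>. \<exists>\<epsilon>::real. \<epsilon> \<noteq> 0 \<and> \<epsilon> *\<^sub>R x \<in> N \<and> N \<subseteq> U))"

definition tvs_bounded :: "'a::{real_vector,topological_space} set \<Rightarrow> bool" where
  "tvs_bounded B \<longleftrightarrow> (\<forall>U. nhd 0 U \<longrightarrow> (\<exists>n::nat. B \<subseteq> (\<lambda>x. real n *\<^sub>R x) ` U))"

end

theory Submission
  imports Defs
begin

(* (1) => (2): the intersections M(l) of all U_beta with beta extending a finite sequence l form
   a countable s*-network at zero.  If an accumulating sequence (s_k) met each M(alpha|n) only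
   finitely often, then every s_k outside M(alpha|0) would be excluded by some U_beta_k with
   beta_k agreeing with alpha on a prefix whose length tends to infinity with k; a single gamma
   dominates all beta_k, and U_gamma contains only finitely many s_k.
   (2) => (3) => (4) are immediate, and (4) => (5) applies (4) to the null sequence x/(n+1).
   (5) => (6): the sets S(N,m) = {t y : |t| <= m, y in N} with N in the radial network are
   countably many, so a counting argument gives x in A such that A meets every finite
   intersection of those S(N,m) containing x in an uncountable set.  These traces then have
   an infinite pseudo-intersection B in A.  For a balanced neighbourhood W some N in W
   contains a multiple of x, so x lies in some S(N,m) contained in m W, and B is absorbed
   by W up to finitely many points.
   (6) => (7): an infinite bounded set {b_n} of linearly independent vectors yields the null
   sequence b_n/(n+1), whose closure is compact and spans an infinite-dimensional space. *)

lemma nhdE: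
  assumes "nhd x W"
  obtains V where "open V" "x \<in> V" "V \<subseteq> W"
  using assms unfolding nhd_def by blast

lemma open_imp_nhd: "open V \<Longrightarrow> x \<in> V \<Longrightarrow> nhd x V"
  unfolding nhd_def by blast

lemma LIMSEQ_imp_accumulates:
  assumes "s \<longlonglongrightarrow> x"
  shows "accumulates s x"
  unfolding accumulates_def
proof (intro allI impI)
  fix W
  assume "nhd x W"
  then obtain V where V: "open V" "x \<in> V" "V \<subseteq> W" by (rule nhdE)
  then obtain N where "\<And>n. n \<ge> N \<Longrightarrow> s n \<in> W"
    using topological_tendstoD[OF assms V(1,2)] by (auto simp: eventually_sequentially)
  then have "{N..} \<subseteq> {n. s n \<in> W}" by auto
  then show "infinite {n. s n \<in> W}"
    using infinite_Ici finite_subset by blast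
qed

lemma lcs_tendsto_scaleR:
  fixes E :: "'a::{real_vector,t2_space} itself" and f :: "'b \<Rightarrow> 'a"
  assumes "locally_convex_space E" and "(r \<longlongrightarrow> a) F" and "(f \<longlongrightarrow> x) F"
  shows "((\<lambda>n. r n *\<^sub>R f n) \<longlongrightarrow> a *\<^sub>R x) F"
proof -
  have "isCont (\<lambda>p::real \<times> 'a. fst p *\<^sub>R snd p) (a, x)"
    using assms(1) unfolding locally_convex_space_def
    by (simp add: continuous_on_eq_continuous_at)
  from isCont_tendsto_compose[OF this tendsto_Pair[OF assms(2,3)]] show ?thesis
    by simp
qed

definition balanced :: "'a::real_vector set \<Rightarrow> bool" where
  "balanced W \<longleftrightarrow> (\<forall>t. \<forall>w\<in>W. \<bar>t\<bar> \<le> 1 \<longrightarrow> t *\<^sub>R w \<in> W)"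

lemma convex_symmetric_imp_balanced:
  assumes "convex V" and "\<And>x. x \<in> V \<Longrightarrow> - x \<in> V"
  shows "balanced V"
  unfolding balanced_def
proof (intro allI ballI impI)
  fix t :: real and w
  assume "w \<in> V" "\<bar>t\<bar> \<le> 1"
  then have "((1 + t) / 2) *\<^sub>R w + ((1 - t) / 2) *\<^sub>R (- w) \<in> V"
    using assms by (intro convexD) (auto simp: field_simps)
  also have "((1 + t) / 2) *\<^sub>R w + ((1 - t) / 2) *\<^sub>R (- w) = t *\<^sub>R w"
    by (simp add: algebra_simps flip: scaleR_add_left) (simp add: field_simps)
  finally show "t *\<^sub>R w \<in> V" .
qed

lemma lcs_balanced_nhd:
  fixes E :: "'a::{real_vector,t2_space} itself"
  assumes lcs: "locally_convex_space E" and "nhd (0::'a) U"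
  obtains W where "nhd 0 W" "W \<subseteq> U" "balanced W"
proof -
  obtain V :: "'a set" where V: "open V" "convex V" "0 \<in> V" "V \<subseteq> U"
    using assms unfolding locally_convex_space_def by blast
  define W where "W = V \<inter> uminus -` V"
  have "continuous_on UNIV (uminus :: 'a \<Rightarrow> 'a)"
    unfolding continuous_on_def
    using lcs_tendsto_scaleR[OF lcs tendsto_const tendsto_ident_at, of "-1"] by simp
  then have "open W"
    unfolding W_def using V(1) by (intro open_Int open_vimage)
  moreover have "convex W"
    unfolding W_def using V(2) by (intro convex_Int convex_linear_vimage linear_uminus)
  then have "balanced W"
    by (rule convex_symmetric_imp_balanced) (simp add: W_def)
  moreover have "0 \<in> W" "W \<subseteq> U"
    using V(3,4) by (auto simp: W_def)
  ultimately show ?thesis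
    using that open_imp_nhd by blast
qed

lemma balanced_scaleR_subset:
  assumes "balanced W" and "\<bar>a\<bar> \<le> b"
  shows "(\<lambda>y. a *\<^sub>R y) ` W \<subseteq> (\<lambda>y. b *\<^sub>R y) ` W"
proof (cases "b = 0")
  case True
  then show ?thesis using assms(2) by simp
next
  case False
  with assms(2) have "0 < b" by linarith
  with assms(2) have "\<bar>a / b\<bar> \<le> 1" by simp
  show ?thesis
  proof
    fix z
    assume "z \<in> (\<lambda>y. a *\<^sub>R y) ` W"
    then obtain w where w: "w \<in> W" "z = a *\<^sub>R w" by blast
    have "(a / b) *\<^sub>R w \<in> W"
      using assms(1) w(1) \<open>\<bar>a / b\<bar> \<le> 1\<close> unfolding balanced_def by blast
    moreover have "z = b *\<^sub>R ((a / b) *\<^sub>R w)"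
      using False w(2) by simp
    ultimately show "z \<in> (\<lambda>y. b *\<^sub>R y) ` W" by blast
  qed
qed

definition absorbs :: "'a::real_vector set \<Rightarrow> 'a set \<Rightarrow> bool" where
  "absorbs W B \<longleftrightarrow> (\<exists>n::nat. B \<subseteq> (\<lambda>y. real n *\<^sub>R y) ` W)"

lemma tvs_bounded_iff_absorbs: "tvs_bounded B \<longleftrightarrow> (\<forall>U. nhd 0 U \<longrightarrow> absorbs U B)"
  unfolding tvs_bounded_def absorbs_def ..

lemma absorbs_subset: "absorbs W B \<Longrightarrow> A \<subseteq> B \<Longrightarrow> absorbs W A"
  unfolding absorbs_def by blast

lemma absorbs_mono: "absorbs W B \<Longrightarrow> W \<subseteq> U \<Longrightarrow> absorbs U B"
  unfolding absorbs_def by blast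

lemma absorbs_Un:
  assumes "balanced W" "absorbs W A" "absorbs W B"
  shows "absorbs W (A \<union> B)"
proof -
  obtain m n :: nat where "A \<subseteq> (\<lambda>y. real m *\<^sub>R y) ` W" "B \<subseteq> (\<lambda>y. real n *\<^sub>R y) ` W"
    using assms(2,3) unfolding absorbs_def by blast
  moreover have "(\<lambda>y. real k *\<^sub>R y) ` W \<subseteq> (\<lambda>y. real (max m n) *\<^sub>R y) ` W" if "k \<le> max m n" for k
    using balanced_scaleR_subset[OF assms(1), of "real k" "real (max m n)"] that by simp
  ultimately have "A \<union> B \<subseteq> (\<lambda>y. real (max m n) *\<^sub>R y) ` W"
    by (meson Un_least max.cobounded1 max.cobounded2 order_trans)
  then show ?thesis
    unfolding absorbs_def by (rule exI)
qed

lemma lcs_absorbs_finite: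
  fixes E :: "'a::{real_vector,t2_space} itself" and F :: "'a set"
  assumes lcs: "locally_convex_space E" and W: "nhd 0 W" "balanced W" and "finite F"
  shows "absorbs W F"
  using \<open>finite F\<close>
proof (induction F rule: finite_induct)
  case empty
  show ?case unfolding absorbs_def by simp
next
  case (insert x F)
  obtain V where V: "open V" "0 \<in> V" "V \<subseteq> W" using W(1) by (rule nhdE)
  have "(\<lambda>n. inverse (real (Suc n)) *\<^sub>R x) \<longlonglongrightarrow> 0"
    using lcs_tendsto_scaleR[OF lcs LIMSEQ_inverse_real_of_nat tendsto_const] by simp
  from topological_tendstoD[OF this V(1,2)]
  obtain n where "inverse (real (Suc n)) *\<^sub>R x \<in> V"
    unfolding eventually_sequentially by blast
  then have "x = real (Suc n) *\<^sub>R (inverse (real (Suc n)) *\<^sub>R x)"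
    and "inverse (real (Suc n)) *\<^sub>R x \<in> W" using V(3) by auto
  then have "absorbs W {x}" unfolding absorbs_def by blast
  with absorbs_Un[OF W(2) this insert.IH] show ?case by simp
qed

lemma s_star_imp_cs_star_network: "s_star_network_at \<N> x \<Longrightarrow> cs_star_network_at \<N> x"
  unfolding s_star_network_at_def cs_star_network_at_def
  using LIMSEQ_imp_accumulates by blast

lemma cs_star_imp_cs_bullet_network: "cs_star_network_at \<N> x \<Longrightarrow> cs_bullet_network_at \<N> x"
  unfolding cs_star_network_at_def cs_bullet_network_at_def
  by (meson not_finite_existsD)

lemma lcs_cs_bullet_imp_radial_network:
  fixes E :: "'a::{real_vector,t2_space} itself" and \<N> :: "'a set set"
  assumes lcs: "locally_convex_space E" and "cs_bullet_network_at \<N> 0"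
  shows "radial_network \<N>"
  unfolding radial_network_def
proof (intro allI impI)
  fix U :: "'a set" and x :: 'a
  assume "nhd 0 U"
  moreover have "(\<lambda>n. inverse (real (Suc n)) *\<^sub>R x) \<longlonglongrightarrow> 0"
    using lcs_tendsto_scaleR[OF lcs LIMSEQ_inverse_real_of_nat tendsto_const] by simp
  ultimately obtain N n where "N \<in> \<N>" "N \<subseteq> U" "inverse (real (Suc n)) *\<^sub>R x \<in> N"
    using assms(2) unfolding cs_bullet_network_at_def by blast
  then show "\<exists>N\<in>\<N>. \<exists>\<epsilon>::real. \<epsilon> \<noteq> 0 \<and> \<epsilon> *\<^sub>R x \<in> N \<and> N \<subseteq> U"
    by (intro bexI[of _ N] exI[of _ "inverse (real (Suc n))"]) auto
qed

definition cylinder_Inter :: "((nat \<Rightarrow> nat) \<Rightarrow> 'a set) \<Rightarrow> nat list \<Rightarrow> 'a set" where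
  "cylinder_Inter U l = \<Inter>{U \<beta> | \<beta>. map \<beta> [0..<length l] = l}"

lemma mem_cylinder_Inter_prefix:
  "x \<in> cylinder_Inter U (map \<alpha> [0..<n]) \<longleftrightarrow> (\<forall>\<beta>. (\<forall>i<n. \<beta> i = \<alpha> i) \<longrightarrow> x \<in> U \<beta>)"
  unfolding cylinder_Inter_def by auto (metis atLeastLessThan_iff)

lemma bounded_by_agreement_on_growing_prefixes:
  fixes \<beta> :: "'k \<Rightarrow> nat \<Rightarrow> nat"
  assumes agree: "\<And>k i. k \<in> K \<Longrightarrow> i < \<nu> k \<Longrightarrow> \<beta> k i = \<alpha> i"
    and fin: "\<And>i. finite {k\<in>K. \<nu> k \<le> i}"
  shows "\<exists>\<gamma>. \<forall>k\<in>K. \<beta> k \<le> \<gamma>"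
proof -
  define \<gamma> where "\<gamma> i = max (\<alpha> i) (Max ((\<lambda>k. \<beta> k i) ` {k\<in>K. \<nu> k \<le> i}))" for i
  have "\<beta> k i \<le> \<gamma> i" if "k \<in> K" for k i
  proof (cases "\<nu> k \<le> i")
    case True
    then have "\<beta> k i \<le> Max ((\<lambda>k. \<beta> k i) ` {k\<in>K. \<nu> k \<le> i})"
      using fin that by (intro Max_ge) auto
    then show ?thesis by (simp add: \<gamma>_def)
  next
    case False
    then show ?thesis using agree that by (simp add: \<gamma>_def)
  qed
  then show ?thesis by (auto intro: le_funI)
qed

lemma ww_base_cylinder_catches_accumulating:
  fixes U :: "(nat \<Rightarrow> nat) \<Rightarrow> 'a::topological_space set"
  assumes nhd: "\<And>\<beta>. nhd x (U \<beta>)" and anti: "\<And>\<beta> \<gamma>. \<beta> \<le> \<gamma> \<Longrightarrow> U \<gamma> \<subseteq> U \<beta>"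
    and acc: "accumulates s x"
  shows "\<exists>n. infinite {k. s k \<in> cylinder_Inter U (map \<alpha> [0..<n])}"
proof (rule ccontr)
  define C where "C n = cylinder_Inter U (map \<alpha> [0..<n])" for n
  assume "\<nexists>n. infinite {k. s k \<in> cylinder_Inter U (map \<alpha> [0..<n])}"
  then have fin: "finite {k. s k \<in> C n}" for n
    by (simp add: C_def)
  define K where "K = {k. s k \<notin> C 0}"
  \<comment> \<open>Capping \<open>\<nu> k\<close> by \<open>k\<close> makes \<open>{k\<in>K. \<nu> k \<le> i}\<close> finite.\<close>
  define \<nu> where "\<nu> k = (GREATEST n. n \<le> k \<and> s k \<notin> C n)" for k
  have \<nu>: "s k \<notin> C (\<nu> k)" "\<And>n. \<nu> k < n \<Longrightarrow> n \<le> k \<Longrightarrow> s k \<in> C n" if "k \<in> K" for k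
  proof -
    have P0: "0 \<le> k \<and> s k \<notin> C 0" and bound: "\<And>n. n \<le> k \<and> s k \<notin> C n \<Longrightarrow> n \<le> k"
      using that by (auto simp: K_def)
    show "s k \<notin> C (\<nu> k)"
      using GreatestI_nat[of "\<lambda>n. n \<le> k \<and> s k \<notin> C n", OF P0 bound] by (simp add: \<nu>_def)
    show "s k \<in> C n" if "\<nu> k < n" "n \<le> k" for n
    proof (rule ccontr)
      assume "s k \<notin> C n"
      with \<open>n \<le> k\<close> have "n \<le> \<nu> k"
        unfolding \<nu>_def by (intro Greatest_le_nat[where b = k]) auto
      with \<open>\<nu> k < n\<close> show False by simp
    qed
  qed
  have "\<exists>b. (\<forall>i<\<nu> k. b i = \<alpha> i) \<and> s k \<notin> U b" if "k \<in> K" for k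
    using \<nu>(1)[OF that] by (simp add: C_def mem_cylinder_Inter_prefix)
  then obtain \<beta> where \<beta>: "\<And>k. k \<in> K \<Longrightarrow> (\<forall>i<\<nu> k. \<beta> k i = \<alpha> i) \<and> s k \<notin> U (\<beta> k)"
    by metis
  have "{k\<in>K. \<nu> k \<le> i} \<subseteq> {..i} \<union> {k. s k \<in> C (Suc i)}" for i
  proof
    fix k
    assume k: "k \<in> {k\<in>K. \<nu> k \<le> i}"
    show "k \<in> {..i} \<union> {k. s k \<in> C (Suc i)}"
    proof (cases "k \<le> i")
      case False
      with k \<nu>(2)[of k "Suc i"] show ?thesis by simp
    qed simp
  qed
  then have "finite {k\<in>K. \<nu> k \<le> i}" for i
    using fin by (meson finite_Un finite_atMost finite_subset)
  then obtain \<gamma> where \<gamma>: "\<And>k. k \<in> K \<Longrightarrow> \<beta> k \<le> \<gamma>"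
    using bounded_by_agreement_on_growing_prefixes[of K \<nu> \<beta> \<alpha>] \<beta> by metis
  have "s k \<in> C 0" if "s k \<in> U \<gamma>" for k
  proof (rule ccontr)
    assume "s k \<notin> C 0"
    then have "k \<in> K" by (simp add: K_def)
    then have "U \<gamma> \<subseteq> U (\<beta> k)" using \<gamma> anti by blast
    with \<beta>[OF \<open>k \<in> K\<close>] that show False by blast
  qed
  then have "{k. s k \<in> U \<gamma>} \<subseteq> {k. s k \<in> C 0}" by blast
  moreover have "infinite {k. s k \<in> U \<gamma>}"
    using acc nhd unfolding accumulates_def by blast
  ultimately show False
    using fin[of 0] finite_subset by blast
qed

lemma ww_base_imp_countable_s_star_network:
  fixes U :: "(nat \<Rightarrow> nat) \<Rightarrow> 'a::topological_space set"
  assumes nhd: "\<And>\<beta>. nhd x (U \<beta>)" and base: "\<And>W. nhd x W \<Longrightarrow> \<exists>\<alpha>. U \<alpha> \<subseteq> W"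
    and anti: "\<And>\<beta> \<gamma>. \<beta> \<le> \<gamma> \<Longrightarrow> U \<gamma> \<subseteq> U \<beta>"
  shows "\<exists>\<N>. countable \<N> \<and> s_star_network_at \<N> x"
proof (intro exI conjI)
  show "countable (range (cylinder_Inter U))" by simp
  show "s_star_network_at (range (cylinder_Inter U)) x"
    unfolding s_star_network_at_def
  proof (intro allI impI, elim conjE)
    fix W s
    assume W: "nhd x W" and acc: "accumulates s x"
    obtain \<alpha> where "U \<alpha> \<subseteq> W" using base[OF W] by blast
    obtain n where "infinite {k. s k \<in> cylinder_Inter U (map \<alpha> [0..<n])}"
      using ww_base_cylinder_catches_accumulating[where U = U, OF nhd anti acc] by blast
    moreover have "cylinder_Inter U (map \<alpha> [0..<n]) \<subseteq> U \<alpha>"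
      unfolding subset_iff mem_cylinder_Inter_prefix by blast
    ultimately show "\<exists>N\<in>range (cylinder_Inter U). N \<subseteq> W \<and> infinite {k. s k \<in> N}"
      using \<open>U \<alpha> \<subseteq> W\<close> by blast
  qed
qed

lemma has_ww_base_imp_countable_s_star_network:
  fixes E :: "'a::{real_vector,topological_space} itself"
  assumes "has_ww_base E"
  shows "\<exists>\<N>::'a set set. countable \<N> \<and> s_star_network_at \<N> 0"
proof -
  obtain U :: "(nat \<Rightarrow> nat) \<Rightarrow> 'a set" where U:
    "(\<forall>\<alpha>. nhd 0 (U \<alpha>)) \<and> (\<forall>W. nhd 0 W \<longrightarrow> (\<exists>\<alpha>. U \<alpha> \<subseteq> W)) \<and> (\<forall>\<alpha> \<beta>. \<alpha> \<le> \<beta> \<longrightarrow> U \<beta> \<subseteq> U \<alpha>)"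
    using assms unfolding has_ww_base_def by (rule exE)
  then have "\<And>\<alpha>. nhd 0 (U \<alpha>)" "\<And>W. nhd 0 W \<Longrightarrow> \<exists>\<alpha>. U \<alpha> \<subseteq> W"
    "\<And>\<alpha> \<beta>. \<alpha> \<le> \<beta> \<Longrightarrow> U \<beta> \<subseteq> U \<alpha>"
    by simp_all
  then show ?thesis
    by (rule ww_base_imp_countable_s_star_network)
qed

lemma uncountable_has_point_with_uncountable_traces:
  fixes \<S> :: "'a set set"
  assumes "countable \<S>" and "uncountable A"
  shows "\<exists>x\<in>A. \<forall>Q. finite Q \<longrightarrow> Q \<subseteq> \<S> \<longrightarrow> x \<in> \<Inter>Q \<longrightarrow> uncountable (A \<inter> \<Inter>Q)"
proof -
  define Bad where
    "Bad = (\<Union>Q\<in>{Q. finite Q \<and> Q \<subseteq> \<S> \<and> countable (A \<inter> \<Inter>Q)}. A \<inter> \<Inter>Q)"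
  have "countable {Q. finite Q \<and> Q \<subseteq> \<S> \<and> countable (A \<inter> \<Inter>Q)}"
    by (rule countable_subset[OF _ countable_Collect_finite_subset[OF assms(1)]]) blast
  then have "countable Bad"
    unfolding Bad_def by (rule countable_UN) blast
  then have "\<not> A \<subseteq> Bad"
    using assms(2) countable_subset by metis
  then obtain x where "x \<in> A" "x \<notin> Bad"
    by blast
  have "uncountable (A \<inter> \<Inter>Q)" if "finite Q" "Q \<subseteq> \<S>" "x \<in> \<Inter>Q" for Q
  proof
    assume "countable (A \<inter> \<Inter>Q)"
    with that \<open>x \<in> A\<close> have "x \<in> Bad"
      unfolding Bad_def by blast
    with \<open>x \<notin> Bad\<close> show False ..
  qed
  with \<open>x \<in> A\<close> show ?thesis
    by blast
qed

lemma countable_family_infinite_pseudo_intersection: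
  fixes \<S> :: "'a set set"
  assumes "countable \<S>" and fip: "\<And>Q. finite Q \<Longrightarrow> Q \<subseteq> \<S> \<Longrightarrow> infinite (A \<inter> \<Inter>Q)"
  shows "\<exists>B\<subseteq>A. infinite B \<and> (\<forall>S\<in>\<S>. finite (B - S))"
proof -
  define Q where "Q i = \<S> \<inter> from_nat_into \<S> ` {..i}" for i
  have "\<exists>F. finite F \<and> card F = i \<and> F \<subseteq> A \<inter> \<Inter>(Q i)" for i
    using fip[of "Q i"] by (intro infinite_arbitrarily_large) (simp add: Q_def)
  then obtain F where F: "\<And>i. finite (F i) \<and> card (F i) = i \<and> F i \<subseteq> A \<inter> \<Inter>(Q i)"
    by metis
  define B where "B = (\<Union>i. F i)"
  have "infinite B"
  proof
    assume "finite B"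
    then have "card (F (Suc (card B))) \<le> card B"
      unfolding B_def by (intro card_mono) auto
    then show False
      using F by simp
  qed
  moreover have "finite (B - S)" if "S \<in> \<S>" for S
  proof -
    obtain j where "from_nat_into \<S> j = S"
      using from_nat_into_surj[OF assms(1) \<open>S \<in> \<S>\<close>] by blast
    then have "F i \<subseteq> S" if "j \<le> i" for i
      using F[of i] \<open>S \<in> \<S>\<close> that unfolding Q_def by blast
    have "B - S \<subseteq> (\<Union>i<j. F i)"
    proof
      fix y
      assume "y \<in> B - S"
      then obtain i where "y \<in> F i" "y \<notin> S"
        unfolding B_def by blast
      with \<open>\<And>i. j \<le> i \<Longrightarrow> F i \<subseteq> S\<close> have "i < j"
        using not_less by blast
      with \<open>y \<in> F i\<close> show "y \<in> (\<Union>i<j. F i)"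
        by blast
    qed
    then show ?thesis
      using F by (meson finite_UN_I finite_lessThan finite_subset)
  qed
  moreover have "B \<subseteq> A"
    using F unfolding B_def by blast
  ultimately show ?thesis
    by blast
qed

lemma lcs_countable_radial_network_bounded_subset:
  fixes E :: "'a::{real_vector,t2_space} itself" and \<N> :: "'a set set" and A :: "'a set"
  assumes lcs: "locally_convex_space E" and "countable \<N>" and rad: "radial_network \<N>"
    and "uncountable A"
  shows "\<exists>B\<subseteq>A. infinite B \<and> tvs_bounded B"
proof -
  define S where "S N m = {t *\<^sub>R y | t y. \<bar>t\<bar> \<le> real m \<and> y \<in> N}" for N :: "'a set" and m :: nat
  define \<S> where "\<S> = (\<lambda>(N, m). S N m) ` (\<N> \<times> UNIV)"
  have "countable \<S>"
    using assms(2) by (simp add: \<S>_def)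
  then obtain x :: 'a where "x \<in> A"
    and x: "\<And>Q. finite Q \<Longrightarrow> Q \<subseteq> \<S> \<Longrightarrow> x \<in> \<Inter>Q \<Longrightarrow> uncountable (A \<inter> \<Inter>Q)"
    using uncountable_has_point_with_uncountable_traces assms(4) by metis
  have "countable {T\<in>\<S>. x \<in> T}"
    using \<open>countable \<S>\<close> by (rule countable_subset[rotated]) blast
  moreover have "infinite (A \<inter> \<Inter>Q)" if "finite Q" "Q \<subseteq> {T\<in>\<S>. x \<in> T}" for Q
    using x[OF that(1)] that(2) countable_finite by blast
  ultimately obtain B where B: "B \<subseteq> A" "infinite B" "\<And>T. T \<in> \<S> \<Longrightarrow> x \<in> T \<Longrightarrow> finite (B - T)"
    using countable_family_infinite_pseudo_intersection[of "{T\<in>\<S>. x \<in> T}" A] by blast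
  have "absorbs U B" if U: "nhd 0 U" for U
  proof -
    obtain W where W: "nhd 0 W" "W \<subseteq> U" "balanced W"
      using lcs_balanced_nhd[OF lcs U] by blast
    obtain N \<epsilon> where N: "N \<in> \<N>" "\<epsilon> \<noteq> 0" "\<epsilon> *\<^sub>R x \<in> N" "N \<subseteq> W"
      using rad W(1) unfolding radial_network_def by blast
    define m where "m = nat \<lceil>\<bar>inverse \<epsilon>\<bar>\<rceil>"
    have "x = inverse \<epsilon> *\<^sub>R (\<epsilon> *\<^sub>R x)" "\<bar>inverse \<epsilon>\<bar> \<le> real m"
      using N(2) by (simp_all add: m_def real_nat_ceiling_ge)
    then have "x \<in> S N m"
      unfolding S_def using N(3) by blast
    then have "finite (B - S N m)"
      using B(3) N(1) by (auto simp: \<S>_def)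
    then have "absorbs W (B - S N m)"
      by (rule lcs_absorbs_finite[OF lcs W(1,3)])
    moreover have "S N m \<subseteq> (\<lambda>y. real m *\<^sub>R y) ` W"
    proof
      fix z
      assume "z \<in> S N m"
      then obtain t y where "\<bar>t\<bar> \<le> real m" "y \<in> W" "z = t *\<^sub>R y"
        unfolding S_def using N(4) by blast
      then show "z \<in> (\<lambda>y. real m *\<^sub>R y) ` W"
        using balanced_scaleR_subset[OF W(3)] by blast
    qed
    then have "absorbs W (S N m)"
      unfolding absorbs_def by blast
    ultimately have "absorbs W ((B - S N m) \<union> S N m)"
      by (rule absorbs_Un[OF W(3)])
    then show "absorbs U B"
      by (rule absorbs_subset[OF absorbs_mono[OF _ W(2)]]) blast
  qed
  then show ?thesis
    using B(1,2) by (auto simp: tvs_bounded_iff_absorbs)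
qed

lemma lcs_bounded_scaled_by_null_tendsto_zero:
  fixes E :: "'a::{real_vector,t2_space} itself" and b :: "nat \<Rightarrow> 'a"
  assumes lcs: "locally_convex_space E" and "tvs_bounded B" "range b \<subseteq> B" "r \<longlonglongrightarrow> 0"
  shows "(\<lambda>i. r i *\<^sub>R b i) \<longlonglongrightarrow> 0"
proof (rule topological_tendstoI)
  fix S :: "'a set"
  assume "open S" "0 \<in> S"
  then obtain W where W: "nhd 0 W" "W \<subseteq> S" "balanced W"
    by (rule lcs_balanced_nhd[OF lcs open_imp_nhd])
  obtain n :: nat where n: "B \<subseteq> (\<lambda>y. real n *\<^sub>R y) ` W"
    using assms(2) W(1) unfolding tvs_bounded_def by blast
  have "(\<lambda>i. \<bar>r i\<bar> * real n) \<longlonglongrightarrow> 0"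
    by (intro tendsto_mult_left_zero tendsto_rabs_zero assms(4))
  from order_tendstoD(2)[OF this zero_less_one]
  show "eventually (\<lambda>i. r i *\<^sub>R b i \<in> S) sequentially"
  proof (rule eventually_mono)
    fix i
    assume "\<bar>r i\<bar> * real n < 1"
    have "b i \<in> (\<lambda>y. real n *\<^sub>R y) ` W"
      using n assms(3) by blast
    then obtain w where "w \<in> W" "b i = real n *\<^sub>R w"
      by blast
    then have "r i *\<^sub>R b i \<in> (\<lambda>y. (r i * real n) *\<^sub>R y) ` W"
      by (metis imageI scaleR_scaleR)
    also have "\<dots> \<subseteq> (\<lambda>y. 1 *\<^sub>R y) ` W"
      using \<open>\<bar>r i\<bar> * real n < 1\<close> by (intro balanced_scaleR_subset[OF W(3)]) (simp add: abs_mult)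
    finally show "r i *\<^sub>R b i \<in> S"
      using W(2) by auto
  qed
qed

lemma lcs_infinite_independent_bounded_imp_infinite_dim_compact:
  fixes E :: "'a::{real_vector,t2_space} itself" and B :: "'a set"
  assumes lcs: "locally_convex_space E" and "tvs_bounded B" "independent B" "infinite B"
  shows "\<exists>K::'a set. compact K \<and> \<not> (\<exists>F. finite F \<and> K \<subseteq> span F)"
proof -
  obtain b :: "nat \<Rightarrow> 'a" where b: "inj b" "range b \<subseteq> B"
    using infinite_countable_subset[OF assms(4)] by blast
  define c where "c i = inverse (real (Suc i)) *\<^sub>R b i" for i
  have "c \<longlonglongrightarrow> 0"
    unfolding c_def
    by (rule lcs_bounded_scaled_by_null_tendsto_zero[OF lcs assms(2) b(2) LIMSEQ_inverse_real_of_nat])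
  then have "compactin euclidean (insert 0 (range c))"
    by (intro compactin_sequence_with_limit) auto
  then have "compact (insert 0 (range c))"
    by simp
  moreover have "\<not> (\<exists>F. finite F \<and> insert 0 (range c) \<subseteq> span F)"
  proof
    assume "\<exists>F. finite F \<and> insert 0 (range c) \<subseteq> span F"
    then obtain F where "finite F" "insert 0 (range c) \<subseteq> span F"
      by blast
    then have "c i \<in> span F" for i
      by blast
    moreover have "b i = real (Suc i) *\<^sub>R c i" for i
      by (simp add: c_def)
    ultimately have "b i \<in> span F" for i
      by (metis real_vector.span_scale)
    then have "range b \<subseteq> span F"
      by blast
    with real_vector.independent_span_bound[OF \<open>finite F\<close> real_vector.independent_mono[OF assms(3) b(2)]]
    have "finite (range b)"
      by simp
    then show False
      using range_inj_infinite[OF b(1)] by blast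
  qed
  ultimately show ?thesis
    by blast
qed

theorem theorem5p2:
  fixes E :: "'a::{real_vector,t2_space} itself"
  assumes lcs: "locally_convex_space E"
  defines "P1 \<equiv> has_ww_base E"
      and "P2 \<equiv> (\<exists>\<N>::'a set set. countable \<N> \<and> s_star_network_at \<N> 0)"
      and "P3 \<equiv> (\<exists>\<N>::'a set set. countable \<N> \<and> cs_star_network_at \<N> 0)"
      and "P4 \<equiv> (\<exists>\<N>::'a set set. countable \<N> \<and> cs_bullet_network_at \<N> 0)"
      and "P5 \<equiv> (\<exists>\<N>::'a set set. countable \<N> \<and> radial_network \<N>)"
      and "P6 \<equiv> (\<forall>A::'a set. uncountable A \<longrightarrow> (\<exists>B\<subseteq>A. infinite B \<and> tvs_bounded B))"
      and "P7 \<equiv> (\<exists>K::'a set. compact K \<and> \<not> (\<exists>F. finite F \<and> K \<subseteq> span F))"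
  shows "(P1 \<longrightarrow> P2) \<and> (P2 \<longrightarrow> P3) \<and> (P3 \<longrightarrow> P4) \<and> (P4 \<longrightarrow> P5) \<and> (P5 \<longrightarrow> P6) \<and>
         ((\<exists>B::'a set. independent B \<and> span B = UNIV \<and> uncountable B) \<longrightarrow> (P6 \<longrightarrow> P7))"
proof -
  have "P1 \<longrightarrow> P2"
    unfolding P1_def P2_def by (intro impI has_ww_base_imp_countable_s_star_network)
  moreover have "P2 \<longrightarrow> P3" "P3 \<longrightarrow> P4"
    unfolding P2_def P3_def P4_def
    using s_star_imp_cs_star_network cs_star_imp_cs_bullet_network by blast+
  moreover have "P4 \<longrightarrow> P5"
    unfolding P4_def P5_def using lcs_cs_bullet_imp_radial_network[OF lcs] by blast
  moreover have "P5 \<longrightarrow> P6"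
    unfolding P5_def P6_def using lcs_countable_radial_network_bounded_subset[OF lcs] by blast
  moreover have "P6 \<longrightarrow> P7" if Hamel: "\<exists>H::'a set. independent H \<and> span H = UNIV \<and> uncountable H"
  proof
    assume P6
    obtain H :: "'a set" where H: "independent H" "uncountable H"
      using Hamel by blast
    then obtain B where "B \<subseteq> H" "infinite B" "tvs_bounded B"
      using \<open>P6\<close> unfolding P6_def by blast
    then show P7
      unfolding P7_def
      using lcs_infinite_independent_bounded_imp_infinite_dim_compact[OF lcs] real_vector.independent_mono[OF H(1)]
      by blast
  qed
  ultimately show ?thesis
    by blast
qed

end
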